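(* Let $M,a,b,c$ be positive integers. The following are equivalent: (i) there is a three-link protocol solving MEQ-AD$(3,M)$ in which the ranges of $s_{AB},s_{AC},s_{BC}$ have sizes $a,b,c$ respectively (so its complexity is $\log_2(abc)$); (ii) there is a simple bipartite graph $G(U,V,E)$ with $|U|=a$, $|V|=b$, $|E|=M$ and no isolated vertices, together with a distance-2 edge coloring $W$ of $G$ using exactly $c$ colors. Moreover, when these hold, $ab\ge M$, $ac\ge M$ and $bc\ge M$.
   Context: Three nodes $A,B,C$ hold inputs $x_A,x_B,x_C\in\{1,\dots,M\}$. A three-link protocol is given by maps $s_{AB},s_{AC},s_{BC}$ from $\{1,\dots,M\}$ to finite sets: $A$ sends $s_{AB}(x_A)$ to $B$ and $s_{AC}(x_A)$ to $C$, and $B$ sends $s_{BC}(x_B)$ to $C$ over private point-to-point links. Each node outputs a bit: $EQ_A$ is a function of $x_A$, $EQ_B$ a function of $(x_B,s_{AB}(x_A))$, and $EQ_C$ a function of $(x_C,s_{AC}(x_A),s_{BC}(x_B))$. The protocol solves MEQ-AD$(3,M)$ if for all inputs, $EQ_A=EQ_B=EQ_C=0$ holds iff $x_A=x_B=x_C$. A distance-2 edge coloring of a graph assigns colors to edges so that any two distinct edges that share an endpoint, or are both adjacent to a common third edge, receive different colors. *)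

theory Defs
  imports Main
begin

text \<open>Inputs range over {1..M}. Messages are encoded as natural numbers (any finite
message set embeds into nat). Output bits are booleans: False encodes bit 0,
True encodes bit 1.\<close>

definition solves_MEQ_AD3 ::
  "nat \<Rightarrow> (nat \<Rightarrow> nat) \<Rightarrow> (nat \<Rightarrow> nat) \<Rightarrow> (nat \<Rightarrow> nat)
   \<Rightarrow> (nat \<Rightarrow> bool) \<Rightarrow> (nat \<Rightarrow> nat \<Rightarrow> bool) \<Rightarrow> (nat \<Rightarrow> nat \<Rightarrow> nat \<Rightarrow> bool) \<Rightarrow> bool"
where
  "solves_MEQ_AD3 M sAB sAC sBC EQA EQB EQC \<longleftrightarrow>
     (\<forall>xA\<in>{1..M}. \<forall>xB\<in>{1..M}. \<forall>xC\<in>{1..M}.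
        ((\<not> EQA xA \<and> \<not> EQB xB (sAB xA) \<and> \<not> EQC xC (sAC xA) (sBC xB))
          \<longleftrightarrow> (xA = xB \<and> xB = xC)))"

definition has_protocol :: "nat \<Rightarrow> nat \<Rightarrow> nat \<Rightarrow> nat \<Rightarrow> bool" where
  "has_protocol M a b c \<longleftrightarrow>
     (\<exists>sAB sAC sBC EQA EQB EQC.
        solves_MEQ_AD3 M sAB sAC sBC EQA EQB EQC \<and>
        card (sAB ` {1..M}) = a \<and> card (sAC ` {1..M}) = b \<and> card (sBC ` {1..M}) = c)"

definition bip_graph :: "nat set \<Rightarrow> nat set \<Rightarrow> (nat \<times> nat) set \<Rightarrow> bool" where
  "bip_graph U V E \<longleftrightarrow> finite U \<and> finite V \<and> U \<inter> V = {} \<and> E \<subseteq> U \<times> V"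

definition no_isolated :: "nat set \<Rightarrow> nat set \<Rightarrow> (nat \<times> nat) set \<Rightarrow> bool" where
  "no_isolated U V E \<longleftrightarrow>
     (\<forall>u\<in>U. \<exists>v. (u, v) \<in> E) \<and> (\<forall>v\<in>V. \<exists>u. (u, v) \<in> E)"

definition edges_adj :: "nat \<times> nat \<Rightarrow> nat \<times> nat \<Rightarrow> bool" where
  "edges_adj e f \<longleftrightarrow> fst e = fst f \<or> snd e = snd f"

definition dist2_edge_coloring :: "(nat \<times> nat) set \<Rightarrow> (nat \<times> nat \<Rightarrow> nat) \<Rightarrow> bool" where
  "dist2_edge_coloring E W \<longleftrightarrow>
     (\<forall>e\<in>E. \<forall>f\<in>E. e \<noteq> f \<longrightarrow>
        (edges_adj e f \<or>
         (\<exists>g\<in>E. g \<noteq> e \<and> g \<noteq> f \<and> edges_adj e g \<and> edges_adj g f))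
        \<longrightarrow> W e \<noteq> W f)"

definition has_graph_coloring :: "nat \<Rightarrow> nat \<Rightarrow> nat \<Rightarrow> nat \<Rightarrow> bool" where
  "has_graph_coloring M a b c \<longleftrightarrow>
     (\<exists>U V E W. bip_graph U V E \<and> card U = a \<and> card V = b \<and> card E = M \<and>
        no_isolated U V E \<and> dist2_edge_coloring E W \<and> card (W ` E) = c)"

end

theory Submission
  imports Defs
begin

text \<open>Only the messages matter: a protocol can be taken canonical, with B accepting iff the
message from A is the one its own input would produce, and C accepting iff both incoming
messages are. It then succeeds iff no triple of inputs produces consistent messages unless
all three inputs agree. Reading input x as the edge (sAB x, sAC x) coloured sBC x, this says
that edges are distinct and no two distinct edges of the same colour e, f are bridged by an
edge g with fst g = fst e and snd g = snd f, which is exactly a distance-2 edge colouring.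
The bounds follow because each pair of messages already determines the input.\<close>

lemma solves_MEQ_AD3_D:
  assumes "solves_MEQ_AD3 M sAB sAC sBC EQA EQB EQC"
    and "xA \<in> {1..M}" "xB \<in> {1..M}" "xC \<in> {1..M}"
  shows "(\<not> EQA xA \<and> \<not> EQB xB (sAB xA) \<and> \<not> EQC xC (sAC xA) (sBC xB))
          \<longleftrightarrow> (xA = xB \<and> xB = xC)"
  using assms unfolding solves_MEQ_AD3_def by (elim ballE) auto

definition separating_messages :: "nat \<Rightarrow> (nat \<Rightarrow> nat) \<Rightarrow> (nat \<Rightarrow> nat) \<Rightarrow> (nat \<Rightarrow> nat) \<Rightarrow> bool"
where
  "separating_messages M sAB sAC sBC \<longleftrightarrow>
     (\<forall>xA\<in>{1..M}. \<forall>xB\<in>{1..M}. \<forall>xC\<in>{1..M}.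
        sAB xA = sAB xB \<longrightarrow> sAC xA = sAC xC \<longrightarrow> sBC xB = sBC xC \<longrightarrow> xA = xB \<and> xB = xC)"

lemma separating_messagesD:
  assumes "separating_messages M sAB sAC sBC"
    and "xA \<in> {1..M}" "xB \<in> {1..M}" "xC \<in> {1..M}"
    and "sAB xA = sAB xB" "sAC xA = sAC xC" "sBC xB = sBC xC"
  shows "xA = xB" "xB = xC"
  using assms unfolding separating_messages_def by blast+

lemma solves_MEQ_AD3_imp_separating_messages:
  assumes S: "solves_MEQ_AD3 M sAB sAC sBC EQA EQB EQC"
  shows "separating_messages M sAB sAC sBC"
  unfolding separating_messages_def
proof (intro ballI impI)
  fix xA xB xC assume x: "xA \<in> {1..M}" "xB \<in> {1..M}" "xC \<in> {1..M}"
    and msg: "sAB xA = sAB xB" "sAC xA = sAC xC" "sBC xB = sBC xC"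
  have "\<not> EQA xA" "\<not> EQB xB (sAB xB)" "\<not> EQC xC (sAC xC) (sBC xC)"
    using solves_MEQ_AD3_D[OF S x(1) x(1) x(1)] solves_MEQ_AD3_D[OF S x(2) x(2) x(2)]
      solves_MEQ_AD3_D[OF S x(3) x(3) x(3)] by simp_all
  with msg show "xA = xB \<and> xB = xC"
    using solves_MEQ_AD3_D[OF S x] by simp
qed

lemma separating_messages_imp_solves_MEQ_AD3:
  assumes "separating_messages M sAB sAC sBC"
  shows "solves_MEQ_AD3 M sAB sAC sBC (\<lambda>_. False) (\<lambda>x m. m \<noteq> sAB x)
           (\<lambda>x m n. m \<noteq> sAC x \<or> n \<noteq> sBC x)"
  unfolding solves_MEQ_AD3_def
proof (intro ballI iffI)
  fix xA xB xC assume x: "xA \<in> {1..M}" "xB \<in> {1..M}" "xC \<in> {1..M}"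
    and "\<not> False \<and> \<not> sAB xA \<noteq> sAB xB \<and> \<not> (sAC xA \<noteq> sAC xC \<or> sBC xB \<noteq> sBC xC)"
  then show "xA = xB \<and> xB = xC"
    using separating_messagesD[OF assms x] by simp
qed simp

lemma has_protocol_iff_separating_messages:
  "has_protocol M a b c \<longleftrightarrow>
     (\<exists>sAB sAC sBC. separating_messages M sAB sAC sBC \<and>
        card (sAB ` {1..M}) = a \<and> card (sAC ` {1..M}) = b \<and> card (sBC ` {1..M}) = c)"
  unfolding has_protocol_def
proof (intro iffI; elim exE conjE)
  fix sAB sAC sBC EQA EQB EQC
  assume "solves_MEQ_AD3 M sAB sAC sBC EQA EQB EQC"
  then have "separating_messages M sAB sAC sBC"
    by (rule solves_MEQ_AD3_imp_separating_messages)
  moreover assume "card (sAB ` {1..M}) = a" "card (sAC ` {1..M}) = b" "card (sBC ` {1..M}) = c"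
  ultimately show "\<exists>sAB sAC sBC. separating_messages M sAB sAC sBC \<and>
        card (sAB ` {1..M}) = a \<and> card (sAC ` {1..M}) = b \<and> card (sBC ` {1..M}) = c"
    by blast
next
  fix sAB sAC sBC
  assume "separating_messages M sAB sAC sBC"
  note separating_messages_imp_solves_MEQ_AD3[OF this]
  moreover assume "card (sAB ` {1..M}) = a" "card (sAC ` {1..M}) = b" "card (sBC ` {1..M}) = c"
  ultimately show "\<exists>sAB sAC sBC EQA EQB EQC. solves_MEQ_AD3 M sAB sAC sBC EQA EQB EQC \<and>
        card (sAB ` {1..M}) = a \<and> card (sAC ` {1..M}) = b \<and> card (sBC ` {1..M}) = c"
    by blast
qed

lemma separating_messages_inj_on:
  assumes "separating_messages M sAB sAC sBC"
  shows "inj_on (\<lambda>x. (sAB x, sAC x)) {1..M}"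
    and "inj_on (\<lambda>x. (sAB x, sBC x)) {1..M}"
    and "inj_on (\<lambda>x. (sAC x, sBC x)) {1..M}"
proof -
  show "inj_on (\<lambda>x. (sAB x, sAC x)) {1..M}"
    by (rule inj_onI) (metis prod.inject separating_messagesD(1)[OF assms _ _ _ _ _ refl])
  show "inj_on (\<lambda>x. (sAB x, sBC x)) {1..M}"
    by (rule inj_onI) (metis prod.inject separating_messagesD(1)[OF assms _ _ _ _ refl])
  show "inj_on (\<lambda>x. (sAC x, sBC x)) {1..M}"
    by (rule inj_onI) (metis prod.inject separating_messagesD(2)[OF assms _ _ _ refl])
qed

lemma separating_messages_relabel:
  assumes "separating_messages M sAB sAC sBC"
    and "inj_on \<alpha> (sAB ` {1..M})" and "inj_on \<beta> (sAC ` {1..M})"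
  shows "separating_messages M (\<lambda>x. \<alpha> (sAB x)) (\<lambda>x. \<beta> (sAC x)) sBC"
  unfolding separating_messages_def
proof (intro ballI impI)
  fix xA xB xC assume x: "xA \<in> {1..M}" "xB \<in> {1..M}" "xC \<in> {1..M}"
    and "\<alpha> (sAB xA) = \<alpha> (sAB xB)" "\<beta> (sAC xA) = \<beta> (sAC xC)" and BC: "sBC xB = sBC xC"
  then have "sAB xA = sAB xB" "sAC xA = sAC xC"
    using assms(2,3) by (auto dest: inj_onD)
  then show "xA = xB \<and> xB = xC"
    using separating_messagesD[OF assms(1) x _ _ BC] by simp
qed

lemma dist2_edge_coloring_iff:
  "dist2_edge_coloring E W \<longleftrightarrow>
     (\<forall>e\<in>E. \<forall>f\<in>E. \<forall>g\<in>E. fst g = fst e \<longrightarrow> snd g = snd f \<longrightarrow> W e = W f \<longrightarrow> e = f)"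
    (is "_ \<longleftrightarrow> ?no_bridge")
proof
  assume col: "dist2_edge_coloring E W"
  show ?no_bridge
  proof (intro ballI impI)
    fix e f g assume "e \<in> E" "f \<in> E" "g \<in> E" "fst g = fst e" "snd g = snd f" "W e = W f"
    then show "e = f"
      using col unfolding dist2_edge_coloring_def edges_adj_def by (metis prod.collapse)
  qed
next
  assume H: ?no_bridge
  show "dist2_edge_coloring E W"
    unfolding dist2_edge_coloring_def
  proof (intro ballI impI notI)
    fix e f assume e: "e \<in> E" and f: "f \<in> E" and "e \<noteq> f" and "W e = W f"
      and "edges_adj e f \<or> (\<exists>g\<in>E. g \<noteq> e \<and> g \<noteq> f \<and> edges_adj e g \<and> edges_adj g f)"
    then show False
      using H[rule_format, OF e f] H[rule_format, OF f e]
      unfolding edges_adj_def by (metis e f)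
  qed
qed

lemma separating_messages_iff_dist2_edge_coloring:
  assumes W: "\<forall>x\<in>{1..M}. sBC x = W (ed x)"
  shows "separating_messages M (\<lambda>x. fst (ed x)) (\<lambda>x. snd (ed x)) sBC \<longleftrightarrow>
         inj_on ed {1..M} \<and> dist2_edge_coloring (ed ` {1..M}) W"
proof
  assume sep: "separating_messages M (\<lambda>x. fst (ed x)) (\<lambda>x. snd (ed x)) sBC"
  have "inj_on ed {1..M}"
    using separating_messages_inj_on(1)[OF sep] by simp
  moreover have "dist2_edge_coloring (ed ` {1..M}) W"
    unfolding dist2_edge_coloring_iff
  proof (intro ballI impI)
    fix e f g assume "e \<in> ed ` {1..M}" "f \<in> ed ` {1..M}" "g \<in> ed ` {1..M}"
      and "fst g = fst e" "snd g = snd f" "W e = W f"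
    then obtain xA xB xC where x: "xA \<in> {1..M}" "xB \<in> {1..M}" "xC \<in> {1..M}"
      and "e = ed xB" "f = ed xC" "g = ed xA"
      and "fst (ed xA) = fst (ed xB)" "snd (ed xA) = snd (ed xC)" "W (ed xB) = W (ed xC)"
      by blast
    moreover from this have "xB = xC"
      using separating_messagesD(2)[OF sep x] W by simp
    ultimately show "e = f" by simp
  qed
  ultimately show "inj_on ed {1..M} \<and> dist2_edge_coloring (ed ` {1..M}) W" ..
next
  assume "inj_on ed {1..M} \<and> dist2_edge_coloring (ed ` {1..M}) W"
  then have inj: "inj_on ed {1..M}"
    and bridge: "\<And>e f g. e \<in> ed ` {1..M} \<Longrightarrow> f \<in> ed ` {1..M} \<Longrightarrow> g \<in> ed ` {1..M} \<Longrightarrow>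
      fst g = fst e \<Longrightarrow> snd g = snd f \<Longrightarrow> W e = W f \<Longrightarrow> e = f"
    unfolding dist2_edge_coloring_iff by blast+
  show "separating_messages M (\<lambda>x. fst (ed x)) (\<lambda>x. snd (ed x)) sBC"
    unfolding separating_messages_def
  proof (intro ballI impI)
    fix xA xB xC assume x: "xA \<in> {1..M}" "xB \<in> {1..M}" "xC \<in> {1..M}"
      and AB: "fst (ed xA) = fst (ed xB)" and AC: "snd (ed xA) = snd (ed xC)"
      and "sBC xB = sBC xC"
    then have "W (ed xB) = W (ed xC)" using W by simp
    then have "ed xB = ed xC"
      using bridge[of "ed xB" "ed xC" "ed xA"] x AB AC by simp
    moreover from this have "ed xA = ed xB"
      using AB AC by (simp add: prod_eq_iff)
    ultimately show "xA = xB \<and> xB = xC"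
      using inj_onD[OF inj] x by metis
  qed
qed

lemma card_le_mult_card_image:
  assumes "finite A" and "inj_on (\<lambda>x. (f x, g x)) A"
  shows "card A \<le> card (f ` A) * card (g ` A)"
proof -
  have "card A = card ((\<lambda>x. (f x, g x)) ` A)"
    using card_image[OF assms(2)] by simp
  also have "\<dots> \<le> card (f ` A \<times> g ` A)"
    by (rule card_mono) (use assms(1) in auto)
  finally show ?thesis by (simp add: card_cartesian_product)
qed

lemma has_protocol_imp_bounds:
  assumes "has_protocol M a b c"
  shows "M \<le> a * b" "M \<le> a * c" "M \<le> b * c"
proof -
  obtain sAB sAC sBC where sep: "separating_messages M sAB sAC sBC"
    and "card (sAB ` {1..M}) = a" "card (sAC ` {1..M}) = b" "card (sBC ` {1..M}) = c"
    using assms unfolding has_protocol_iff_separating_messages by blast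
  then show "M \<le> a * b" "M \<le> a * c" "M \<le> b * c"
    using card_le_mult_card_image[OF _ separating_messages_inj_on(1)[OF sep]]
      card_le_mult_card_image[OF _ separating_messages_inj_on(2)[OF sep]]
      card_le_mult_card_image[OF _ separating_messages_inj_on(3)[OF sep]] by simp_all
qed

lemma separating_messages_imp_has_graph_coloring:
  assumes sep: "separating_messages M sAB sAC sBC"
  shows "has_graph_coloring M (card (sAB ` {1..M})) (card (sAC ` {1..M})) (card (sBC ` {1..M}))"
proof -
  define U where "U = (\<lambda>u. 2 * u) ` sAB ` {1..M}"
  define V where "V = (\<lambda>v. 2 * v + 1) ` sAC ` {1..M}"
  \<comment> \<open>even and odd labels keep the two sides of the graph disjoint\<close>
  define ed where "ed x = (2 * sAB x, 2 * sAC x + 1)" for x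
  define E where "E = ed ` {1..M}"
  have "separating_messages M (\<lambda>x. fst (ed x)) (\<lambda>x. snd (ed x)) sBC"
    using separating_messages_relabel[OF sep, of "\<lambda>u. 2 * u" "\<lambda>v. 2 * v + 1"]
    by (simp add: ed_def inj_on_def)
  moreover have inj: "inj_on ed {1..M}"
    using calculation separating_messages_inj_on(1) by fastforce
  define W where "W e = sBC (inv_into {1..M} ed e)" for e
  have W: "\<forall>x\<in>{1..M}. sBC x = W (ed x)"
    using inj by (simp add: W_def)
  ultimately have "dist2_edge_coloring E W"
    unfolding E_def using separating_messages_iff_dist2_edge_coloring by blast
  moreover have "bip_graph U V E"
    unfolding bip_graph_def U_def V_def E_def ed_def by auto presburger
  moreover have "no_isolated U V E"
    unfolding no_isolated_def U_def V_def E_def ed_def by auto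
  moreover have "card U = card (sAB ` {1..M})" "card V = card (sAC ` {1..M})"
    unfolding U_def V_def by (simp_all add: card_image inj_on_def)
  moreover have "card E = M"
    unfolding E_def using card_image[OF inj] by simp
  moreover have "W ` E = sBC ` {1..M}"
    unfolding E_def image_image using W by simp
  ultimately show ?thesis
    unfolding has_graph_coloring_def by metis
qed

lemma has_graph_coloring_imp_has_protocol:
  assumes "has_graph_coloring M a b c"
  shows "has_protocol M a b c"
proof -
  obtain U V E W where "bip_graph U V E" and card: "card U = a" "card V = b" "card E = M"
    "card (W ` E) = c" and "no_isolated U V E" and col: "dist2_edge_coloring E W"
    using assms unfolding has_graph_coloring_def by blast
  then have "finite E" "fst ` E = U" "snd ` E = V"
    unfolding bip_graph_def no_isolated_def by (auto intro: finite_subset) force+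
  obtain ed where ed: "bij_betw ed {1..M} E"
    using ex_bij_betw_nat_finite_1[OF \<open>finite E\<close>] card(3) by auto
  then have "separating_messages M (\<lambda>x. fst (ed x)) (\<lambda>x. snd (ed x)) (\<lambda>x. W (ed x))"
    using separating_messages_iff_dist2_edge_coloring[of M "\<lambda>x. W (ed x)" W ed] col
    by (simp add: bij_betw_def)
  moreover have "(\<lambda>x. fst (ed x)) ` {1..M} = U" "(\<lambda>x. snd (ed x)) ` {1..M} = V"
    "(\<lambda>x. W (ed x)) ` {1..M} = W ` E"
    using ed \<open>fst ` E = U\<close> \<open>snd ` E = V\<close> by (auto simp: bij_betw_def image_comp[symmetric])
  ultimately show ?thesis
    unfolding has_protocol_iff_separating_messages using card by metis
qed

theorem theorem1:
  fixes M a b c :: nat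
  assumes "M > 0" and "a > 0" and "b > 0" and "c > 0"
  shows "(has_protocol M a b c \<longleftrightarrow> has_graph_coloring M a b c) \<and>
         (has_protocol M a b c \<longrightarrow> a * b \<ge> M \<and> a * c \<ge> M \<and> b * c \<ge> M)"
proof -
  have "has_protocol M a b c \<longleftrightarrow> has_graph_coloring M a b c"
  proof
    assume "has_protocol M a b c"
    then obtain sAB sAC sBC where "separating_messages M sAB sAC sBC"
      and "card (sAB ` {1..M}) = a" "card (sAC ` {1..M}) = b" "card (sBC ` {1..M}) = c"
      unfolding has_protocol_iff_separating_messages by blast
    then show "has_graph_coloring M a b c"
      using separating_messages_imp_has_graph_coloring by blast
  qed (rule has_graph_coloring_imp_has_protocol)
  then show ?thesis
    using has_protocol_imp_bounds by blast
qed

end
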